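(* Let $R_s>0$, $\lambda=2^{R_s}$, and let $\gamma_d,\gamma_e$ be independent, with $\gamma_t$ ($t\in\{d,e\}$) generalized-$K$ distributed with parameters $m_t>0,k_t>0$ and mean $\overline\gamma_t>0$, i.e. with CDF $F_{\gamma_t}(x)=\frac{1}{\Gamma(k_t)\Gamma(m_t)}G_{1,3}^{2,1}\!\left(\frac{k_tm_tx}{\overline\gamma_t}\,\middle|\,{1\atop k_t,m_t,0}\right)$. Assume $k_d=m_d$ and $m_d\neq1$. Let $\sigma_e^2$ be the variance of $\gamma_e$, $P(x)=F_{\gamma_d}(\lambda-1+\lambda x)$, $\widetilde P_{\rm sop}(\overline\gamma_d):=P(\overline\gamma_e)+\frac{\sigma_e^2}{2}P''(\overline\gamma_e)$, and write $a=\lambda-1+\lambda\overline\gamma_e$ and $c_e=\frac{(k_e+1)(m_e+1)}{k_em_e}-1$. Then, with all parameters except $\overline\gamma_d$ fixed, as $\overline\gamma_d\to\infty$, $$\widetilde P_{\rm sop}(\overline\gamma_d)=\overline\gamma_d^{-m_d}\left(\frac{\psi(m_d+1)+2\psi(1)-\psi(m_d)-\ln\frac{m_d^2a}{\overline\gamma_d}}{m_d^{-2m_d+1}\Gamma^2(m_d)a^{-m_d}}+\frac{c_e\left(\psi(m_d-1)+2\psi(1)-\psi(m_d)-\ln\frac{m_d^2a}{\overline\gamma_d}\right)}{2m_d^{-2m_d}\lambda^{-2}\overline\gamma_e^{-2}\Gamma(m_d)\Gamma(m_d-1)a^{2-m_d}}\right)+o(\overline\gamma_d^{-m_d}).$$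
   Context: $\psi$ is the digamma function, $\Gamma$ the Gamma function, and $G^{m,n}_{p,q}$ the standard Meijer G-function. The generalized-$K$ distribution with parameters $k,m$ and mean $\overline\gamma$ is that of $\overline\gamma XY$ with $X,Y$ independent unit-mean Gamma variables of shapes $k$ and $m$. $\widetilde P_{\rm sop}$ is the second-order Taylor approximation of the secrecy outage probability $\mathbb{E}\{F_{\gamma_d}(\lambda-1+\lambda\gamma_e)\}$ around the mean of $\gamma_e$. *)

theory Defs
  imports "HOL-Analysis.Analysis" "HOL-Library.Landau_Symbols"
begin

definition gamma_dens :: "real \<Rightarrow> real \<Rightarrow> real" where
  "gamma_dens k t = (if t > 0 then k powr k * t powr (k - 1) * exp (- k * t) / Gamma k else 0)"

text \<open>CDF of the generalized-K distribution with parameters k, m and mean g: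
  the law of g X Y, X ~ Gamma(k) and Y ~ Gamma(m) independent and unit-mean.
  (This equals the Meijer-G expression of the paper.)\<close>
definition genK_cdf :: "real \<Rightarrow> real \<Rightarrow> real \<Rightarrow> real \<Rightarrow> real" where
  "genK_cdf k m g x =
     (LINT s|lborel. LINT t|lborel.
        indicator {..x} (g * s * t) * gamma_dens k s * gamma_dens m t)"

definition genK_var :: "real \<Rightarrow> real \<Rightarrow> real \<Rightarrow> real" where
  "genK_var k m g =
     (LINT s|lborel. LINT t|lborel.
        (g * s * t - g)\<^sup>2 * gamma_dens k s * gamma_dens m t)"

definition sop_approx ::
  "real \<Rightarrow> real \<Rightarrow> real \<Rightarrow> real \<Rightarrow> real \<Rightarrow> real \<Rightarrow> real \<Rightarrow> real" where
  "sop_approx lam kd md gd ke me ge =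
     (let P = (\<lambda>x. genK_cdf kd md gd (lam - 1 + lam * x))
      in P ge + genK_var ke me ge / 2 * deriv (deriv P) ge)"

end

theory Submission
  imports Defs "HOL-Real_Asymp.Real_Asymp"
begin

(*
  For k_d = m_d = m the unit-mean generalized-K law has density
    f(u) = c^2 u^(m-1) K(m^2 u),   c = m^m / Gamma(m),
  where K(z) = int_0^oo exp(-s - z/s) ds/s.  Euler's integral
  psi(1) = int_0^oo (exp(-q) - [q < 1]) dq/q, used once directly and once after q = 1/r,
  gives K(z) = 2 psi(1) - ln z + o(1) and z K'(z) --> -1 as z --> 0+.  Integrating f from 0,
  respectively differentiating it, yields
    F(u)  = c^2 u^m / m * (2 psi(1) + 1/m - ln(m^2 u)) + o(u^m),
    f'(u) = c^2 u^(m-2) * ((m-1) (2 psi(1) - ln(m^2 u)) - 1) + o(u^(m-2)).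
  As P(x) = F((lam - 1 + lam x) / g_d), the Taylor approximation is
  F(a/g_d) + var_e/2 * (lam/g_d)^2 * f'(a/g_d), and u = a/g_d --> 0+ turns both error
  terms into o(g_d^(-m)).  The closed form of the theorem is the same leading term rewritten
  with psi(m+1) = psi(m) + 1/m, psi(m-1) = psi(m) - 1/(m-1) and Gamma(m) = (m-1) Gamma(m-1).
*)

lemma integral_dominated_convergence_at:
  fixes phi :: "'c::first_countable_topology \<Rightarrow> 'a \<Rightarrow> real" and B psi :: "'a \<Rightarrow> real"
  assumes bound: "\<forall>\<^sub>F y in at x within S. phi y \<in> borel_measurable M \<and> (\<forall>s. \<bar>phi y s\<bar> \<le> B s)"
    and "integrable M B"
    and lim: "\<And>s. ((\<lambda>y. phi y s) \<longlongrightarrow> psi s) (at x within S)"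
    and "psi \<in> borel_measurable M"
  shows "((\<lambda>y. LINT s|M. phi y s) \<longlongrightarrow> (LINT s|M. psi s)) (at x within S)"
  unfolding tendsto_at_iff_sequentially
proof (intro allI impI)
  fix X :: "nat \<Rightarrow> 'c"
  assume "\<forall>i. X i \<in> S - {x}" "X \<longlonglongrightarrow> x"
  then have X: "filterlim X (at x within S) sequentially"
    by (auto simp: filterlim_at eventually_sequentially)
  from eventually_compose_filterlim[OF bound X] obtain N where
    N: "\<And>n. n \<ge> N \<Longrightarrow> phi (X n) \<in> borel_measurable M \<and> (\<forall>s. \<bar>phi (X n) s\<bar> \<le> B s)"
    by (auto simp: eventually_sequentially)
  have "(\<lambda>n. LINT s|M. phi (X (n + N)) s) \<longlonglongrightarrow> (LINT s|M. psi s)"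
  proof (rule integral_dominated_convergence[where w = B])
    show "AE s in M. (\<lambda>n. phi (X (n + N)) s) \<longlonglongrightarrow> psi s"
      using filterlim_compose[OF lim X] by (intro AE_I2 LIMSEQ_ignore_initial_segment) simp
    show "AE s in M. norm (phi (X (n + N)) s) \<le> B s" for n
      using N[of "n + N"] by auto
  qed (use assms N in auto)
  then show "((\<lambda>y. LINT s|M. phi y s) \<circ> X) \<longlonglongrightarrow> (LINT s|M. psi s)"
    unfolding o_def by (rule LIMSEQ_offset)
qed

lemma has_real_derivative_integral:
  fixes phi phi' :: "real \<Rightarrow> 'a \<Rightarrow> real" and B :: "'a \<Rightarrow> real"
  assumes x: "a < x" "x < b"
    and int: "\<And>y. y \<in> {a<..<b} \<Longrightarrow> integrable M (phi y)"
    and deriv: "\<And>y s. y \<in> {a<..<b} \<Longrightarrow> ((\<lambda>y. phi y s) has_real_derivative phi' y s) (at y)"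
    and bound: "\<And>y s. y \<in> {a<..<b} \<Longrightarrow> \<bar>phi' y s\<bar> \<le> B s"
    and "integrable M B" and "phi' x \<in> borel_measurable M"
  shows "((\<lambda>y. LINT s|M. phi y s) has_real_derivative (LINT s|M. phi' x s)) (at x)"
  unfolding DERIV_def
proof -
  define q where "q h s = (phi (x + h) s - phi x s) / h" for h s
  have near: "\<forall>\<^sub>F h in at 0. x + h \<in> {a<..<b} \<and> h \<noteq> 0"
  proof -
    have "\<forall>\<^sub>F h in at (0::real). h \<in> {a - x<..<b - x}"
      using x by (intro eventually_at_in_open') auto
    then show ?thesis
      by (simp add: eventually_at_filter) (auto elim: eventually_mono)
  qed
  have q_bound: "\<bar>q h s\<bar> \<le> B s" if h: "x + h \<in> {a<..<b}" "h \<noteq> 0" for h s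
  proof -
    have "\<bar>phi (x + h) s - phi x s\<bar> \<le> B s * \<bar>x + h - x\<bar>"
      using h x deriv bound
      by (intro field_differentiable_bound[of "{a<..<b}", simplified real_norm_def])
         (auto intro: has_field_derivative_at_within)
    with h(2) show ?thesis
      by (simp add: q_def abs_div divide_le_eq)
  qed
  have "((\<lambda>h. LINT s|M. q h s) \<longlongrightarrow> (LINT s|M. phi' x s)) (at 0)"
  proof (rule integral_dominated_convergence_at[where B = B])
    show "\<forall>\<^sub>F h in at 0. q h \<in> borel_measurable M \<and> (\<forall>s. \<bar>q h s\<bar> \<le> B s)"
      using near by eventually_elim (use q_bound int x in \<open>auto simp: q_def[abs_def]\<close>)
    show "((\<lambda>h. q h s) \<longlongrightarrow> phi' x s) (at 0)" for s
      using deriv[of x s] x by (simp add: DERIV_def q_def)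
  qed (use assms in auto)
  moreover have "\<forall>\<^sub>F h in at 0. (LINT s|M. q h s) =
      ((LINT s|M. phi (x + h) s) - (LINT s|M. phi x s)) / h"
    using near by eventually_elim (use int x in \<open>simp add: q_def integral_diff\<close>)
  ultimately show "((\<lambda>h. ((LINT s|M. phi (x + h) s) - (LINT s|M. phi x s)) / h)
      \<longlongrightarrow> (LINT s|M. phi' x s)) (at 0)"
    by (rule Lim_transform_eventually)
qed

lemma integrable_abs_bound:
  fixes f B :: "'a \<Rightarrow> real"
  assumes "integrable M B" "f \<in> borel_measurable M" "\<And>x. \<bar>f x\<bar> \<le> B x"
  shows "integrable M f"
  by (rule Bochner_Integration.integrable_bound[OF assms(1,2)])
     (use assms(3) in \<open>auto intro!: AE_I2 intro: order_trans[OF _ abs_ge_self]\<close>)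

lemma mult_exp_minus_le_1: "x * exp (- x) \<le> (1::real)"
proof -
  have "x \<le> exp x"
    using exp_ge_add_one_self[of x] by linarith
  then show ?thesis
    by (simp add: exp_minus field_simps)
qed

lemma power2_mult_exp_minus_le_2: "x \<ge> 0 \<Longrightarrow> x\<^sup>2 * exp (- x) \<le> (2::real)"
  using exp_lower_Taylor_quadratic[of x] by (simp add: exp_minus field_simps)

lemma has_bochner_integral_Gamma:
  fixes p c :: real
  assumes p: "p > 0" and c: "c > 0"
  shows "has_bochner_integral lborel (\<lambda>t. if t > 0 then t powr (p - 1) * exp (- c * t) else 0)
           (Gamma p / c powr p)"
proof -
  define f where "f b t = (if t > 0 then t powr (p - 1) * exp (- b * t) else 0)" for b t :: real
  have "(\<integral>\<^sup>+t. ennreal (f 1 t) \<partial>lborel) = ennreal (Gamma p)"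
    using Gamma_conv_nn_integral_real[OF p]
    by (auto simp: f_def indicator_def exp_minus field_simps intro!: nn_integral_cong)
  then have "has_bochner_integral lborel (f 1) (Gamma p)"
    using p by (intro has_bochner_integral_nn_integral) (auto simp: f_def[abs_def] intro: Gamma_real_pos less_imp_le)
  then have "has_bochner_integral lborel (\<lambda>t. f 1 (0 + c * t)) (Gamma p /\<^sub>R \<bar>c\<bar>)"
    using c by (subst (asm) lborel_has_bochner_integral_real_affine_iff[of c _ _ 0]) auto
  moreover have "f 1 (0 + c * t) = c powr (p - 1) * f c t" for t
    using c by (auto simp: f_def powr_mult zero_less_mult_iff)
  ultimately have "has_bochner_integral lborel (\<lambda>t. c powr (p - 1) * f c t) (Gamma p / c)"
    using c by (simp add: divide_inverse mult.commute)
  from has_bochner_integral_mult_right[OF this, of "1 / c powr (p - 1)"]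
  have "has_bochner_integral lborel (\<lambda>t. 1 / c powr (p - 1) * (c powr (p - 1) * f c t))
      (1 / c powr (p - 1) * (Gamma p / c))" .
  moreover have "1 / c powr (p - 1) * (Gamma p / c) = Gamma p / c powr p"
    using c by (simp add: powr_diff)
  moreover have "(\<lambda>t. 1 / c powr (p - 1) * (c powr (p - 1) * f c t)) = f c"
    using c by auto
  ultimately have "has_bochner_integral lborel (f c) (Gamma p / c powr p)"
    by metis
  then show ?thesis
    by (simp only: f_def[abs_def])
qed

lemma has_bochner_integral_exp_minus:
  "(c::real) > 0 \<Longrightarrow> has_bochner_integral lborel (\<lambda>s. if s > 0 then exp (- c * s) else 0) (1 / c)"
  using has_bochner_integral_Gamma[of 1 c] by (simp cong: if_cong)

lemma integrable_exp_minus: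
  "(c::real) > 0 \<Longrightarrow> integrable lborel (\<lambda>s. if s > 0 then exp (- c * s) else 0)"
  using has_bochner_integral_exp_minus by (auto simp: has_bochner_integral_iff)

lemma has_bochner_integral_powr_unit_interval:
  fixes p :: real
  assumes p: "p > 0"
  shows "has_bochner_integral lborel (\<lambda>q. if 0 < q \<and> q < 1 then q powr (p - 1) else 0) (1 / p)"
proof -
  have "Gamma (p + 1) = p * Gamma p"
    using p by (intro Gamma_plus1) auto
  moreover have "Gamma p \<noteq> 0"
    using Gamma_real_pos[OF p] by simp
  ultimately have "Beta p 1 = 1 / p"
    by (simp add: Beta_def field_simps add.commute)
  moreover have "((\<lambda>t. t powr (p - 1) * (1 - t) powr (1 - 1)) has_integral Beta p 1) {0..1}"
    using has_integral_Beta_real[OF p, of 1] by simp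
  then have "(\<integral>\<^sup>+q. ennreal (indicator {0..1} q * (q powr (p - 1) * (1 - q) powr (1 - 1))) \<partial>lborel)
      = Beta p 1"
    by (rule nn_integral_has_integral_lebesgue[rotated]) auto
  moreover have "indicator {0..1} q * (q powr (p - 1) * (1 - q) powr (1 - 1))
      = (if 0 < q \<and> q < 1 then q powr (p - 1) else 0)" for q :: real
    by (auto simp: indicator_def)
  ultimately have "(\<integral>\<^sup>+q. ennreal (if 0 < q \<and> q < 1 then q powr (p - 1) else 0) \<partial>lborel) = 1 / p"
    by simp
  then show ?thesis
    using p by (intro has_bochner_integral_nn_integral) auto
qed

lemma has_bochner_integral_inverse_interval:
  fixes s w :: real
  assumes "0 < s" "s \<le> w"
  shows "has_bochner_integral lborel (\<lambda>x. if s < x \<and> x < w then 1 / x else 0) (ln w - ln s)"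
proof -
  have cont: "continuous_on {s..w} (\<lambda>x::real. 1 / x)"
    using assms by (intro continuous_intros) auto
  have "integrable lborel (\<lambda>x. indicator {s..w} x *\<^sub>R (1 / x))"
    using borel_integrable_atLeastAtMost'[OF cont] by (simp add: set_integrable_def)
  moreover have "(LINT x|lborel. indicator {s..w} x *\<^sub>R (1 / x)) = ln w - ln s"
    using assms cont
    by (intro integral_FTC_atLeastAtMost)
       (auto intro!: derivative_eq_intros simp flip: has_real_derivative_iff_has_vector_derivative)
  ultimately have "has_bochner_integral lborel (\<lambda>x. indicator {s..w} x *\<^sub>R (1 / x)) (ln w - ln s)"
    by (simp add: has_bochner_integral_iff)
  moreover have "AE x in lborel. indicator {s..w} x *\<^sub>R (1 / x) = (if s < x \<and> x < w then 1 / x else 0)"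
    using AE_lborel_singleton[of s] AE_lborel_singleton[of w]
    by eventually_elim (auto simp: indicator_def)
  ultimately show ?thesis
    by (subst (asm) has_bochner_integral_cong_AE) auto
qed

lemma has_bochner_integral_lborel_iff_absolutely_integrable_on:
  fixes f :: "real \<Rightarrow> real"
  assumes meas: "(\<lambda>x. indicator S x * f x) \<in> borel_measurable lborel"
  shows "has_bochner_integral lborel (\<lambda>x. indicator S x * f x) I
    \<longleftrightarrow> f absolutely_integrable_on S \<and> integral S f = I"
proof -
  have int_iff: "f absolutely_integrable_on S \<longleftrightarrow> integrable lborel (\<lambda>x. indicator S x * f x)"
    using integrable_completion[OF meas] by (simp add: set_integrable_def)
  have "(\<lambda>x. if x \<in> S then f x else 0) = (\<lambda>x. indicator S x * f x)"
    by (auto simp: indicator_def)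
  with integral_restrict_UNIV[of S f]
  have "integral S f = integral UNIV (\<lambda>x. indicator S x * f x)"
    by simp
  with int_iff integral_lborel[of "\<lambda>x. indicator S x * f x"] show ?thesis
    by (auto simp: has_bochner_integral_iff)
qed

lemma has_bochner_integral_inverse_subst:
  fixes g :: "real \<Rightarrow> real"
  assumes int: "has_bochner_integral lborel (\<lambda>q. if q > 0 then g q else 0) I"
  shows "has_bochner_integral lborel (\<lambda>r. if r > 0 then g (1 / r) / r\<^sup>2 else 0) I"
proof -
  define S :: "real set" where "S = {0<..}"
  have restrict: "(\<lambda>x. if x > 0 then h x else 0) = (\<lambda>x. indicator S x * h x)" for h :: "real \<Rightarrow> real"
    by (auto simp: S_def indicator_def)
  have meas: "(\<lambda>q. indicator S q * g q) \<in> borel_measurable borel"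
    using int by (auto simp: restrict dest: has_bochner_integral_integrable)
  then have "g absolutely_integrable_on S \<and> integral S g = I"
    using int by (simp add: restrict has_bochner_integral_lborel_iff_absolutely_integrable_on)
  moreover have "(\<lambda>r::real. 1 / r) ` S = S"
    by (force simp: S_def image_iff intro: bexI[where x = "1 / _"])
  moreover have "(\<lambda>x. \<bar>- 1 / x\<^sup>2\<bar> * g (1 / x)) absolutely_integrable_on S \<and>
        integral S (\<lambda>x. \<bar>- 1 / x\<^sup>2\<bar> * g (1 / x)) = integral S g
      \<longleftrightarrow> g absolutely_integrable_on ((\<lambda>r. 1 / r) ` S)
        \<and> integral ((\<lambda>r. 1 / r) ` S) g = integral S g"
    by (rule has_absolute_integral_change_of_variables_1')
       (auto simp: S_def inj_on_def power2_eq_square intro!: derivative_eq_intros)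
  ultimately have int': "(\<lambda>x. g (1 / x) / x\<^sup>2) absolutely_integrable_on S
      \<and> integral S (\<lambda>x. g (1 / x) / x\<^sup>2) = I"
    by simp
  have "(\<lambda>r. indicator S (1 / r) * g (1 / r)) \<in> borel_measurable borel"
    by (rule measurable_compose[OF _ meas]) simp
  from borel_measurable_divide[OF this, of "\<lambda>r. r\<^sup>2"]
  have "(\<lambda>r. indicator S (1 / r) * g (1 / r) / r\<^sup>2) \<in> borel_measurable borel"
    by simp
  moreover have "(\<lambda>r. indicator S (1 / r) * g (1 / r) / r\<^sup>2) = (\<lambda>r. indicator S r * (g (1 / r) / r\<^sup>2))"
    by (auto simp: S_def indicator_def)
  ultimately have "(\<lambda>r. indicator S r * (g (1 / r) / r\<^sup>2)) \<in> borel_measurable lborel"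
    by simp
  from has_bochner_integral_lborel_iff_absolutely_integrable_on[OF this] int' show ?thesis
    by (simp only: restrict)
qed

lemma tendsto_integral_exp_damping:
  fixes f :: "real \<Rightarrow> real"
  assumes f: "integrable lborel f" and supp: "\<And>r. r \<le> 0 \<Longrightarrow> f r = 0"
  shows "((\<lambda>z. LINT r|lborel. exp (- z * r) * f r) \<longlongrightarrow> (LINT r|lborel. f r)) (at_right 0)"
proof (rule integral_dominated_convergence_at[where B = "\<lambda>r. \<bar>f r\<bar>"])
  have "\<bar>exp (- z * r) * f r\<bar> \<le> \<bar>f r\<bar>" if "z > 0" for z r
    using that supp[of r] by (cases "r > 0") (auto simp: abs_mult intro: mult_left_le_one_le)
  then show "\<forall>\<^sub>F z in at_right 0. (\<lambda>r. exp (- z * r) * f r) \<in> borel_measurable lborel \<and>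
      (\<forall>r. \<bar>exp (- z * r) * f r\<bar> \<le> \<bar>f r\<bar>)"
    using f by (intro eventually_at_rightI[of 0 1]) auto
  show "((\<lambda>z. exp (- z * r) * f r) \<longlongrightarrow> f r) (at_right 0)" for r
    by (auto intro!: tendsto_eq_intros)
qed (use f in auto)

lemma abs_diff_le_powr_of_deriv_le:
  fixes D D' :: "real \<Rightarrow> real"
  assumes t: "0 < t" "t < u"
    and deriv: "\<And>v. t \<le> v \<Longrightarrow> v \<le> u \<Longrightarrow> (D has_real_derivative D' v) (at v)"
    and bound: "\<And>v. t < v \<Longrightarrow> v < u \<Longrightarrow> \<bar>D' v\<bar> \<le> c * m * v powr (m - 1)"
  shows "\<bar>D u - D t\<bar> \<le> c * u powr m - c * t powr m"
proof (rule differentiable_bound_general[where f' = D' and \<phi>' = "\<lambda>v. c * m * v powr (m - 1)",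
      simplified real_norm_def])
  show "continuous_on {t..u} D"
    using deriv by (intro continuous_at_imp_continuous_on ballI DERIV_isCont) auto
  show "continuous_on {t..u} (\<lambda>v. c * v powr m)"
    using t by (intro continuous_intros) auto
  show "(D has_vector_derivative D' v) (at v)" if "t < v" "v < u" for v
    using deriv[of v] that by (simp add: has_real_derivative_iff_has_vector_derivative)
  show "((\<lambda>v. c * v powr m) has_vector_derivative c * m * v powr (m - 1)) (at v)" if "t < v" "v < u" for v
    using that t
    by (auto intro!: derivative_eq_intros simp flip: has_real_derivative_iff_has_vector_derivative)
qed (use t bound in auto)

lemma smallo_at_right_0_from_deriv:
  fixes D D' :: "real \<Rightarrow> real" and m \<delta> :: real
  assumes m: "m > 0" and \<delta>: "\<delta> > 0"
    and deriv: "\<And>u. 0 < u \<Longrightarrow> u < \<delta> \<Longrightarrow> (D has_real_derivative D' u) (at u)"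
    and lim: "(D \<longlongrightarrow> 0) (at_right 0)"
    and small: "D' \<in> o[at_right 0](\<lambda>u. u powr (m - 1))"
  shows "D \<in> o[at_right 0](\<lambda>u. u powr m)"
proof (rule landau_o.smallI)
  fix c :: real
  assume c: "c > 0"
  from landau_o.smallD[OF small, of "c * m"] c m obtain b where b: "b > 0"
    and D'_le: "\<And>u. 0 < u \<Longrightarrow> u < b \<Longrightarrow> \<bar>D' u\<bar> \<le> c * m * u powr (m - 1)"
    by (auto simp: eventually_at_right_field)
  have "\<bar>D u\<bar> \<le> c * u powr m" if u: "0 < u" "u < min \<delta> b" for u
  proof -
    have "\<forall>\<^sub>F t in at_right 0. \<bar>D u - D t\<bar> \<le> c * u powr m"
    proof (rule eventually_at_rightI[of 0 u])
      fix t :: real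
      assume t: "t \<in> {0<..<u}"
      have "\<bar>D u - D t\<bar> \<le> c * u powr m - c * t powr m"
        using t u by (intro abs_diff_le_powr_of_deriv_le[where D' = D'] deriv D'_le) auto
      moreover have "c * t powr m \<ge> 0"
        using c by simp
      ultimately show "\<bar>D u - D t\<bar> \<le> c * u powr m"
        by linarith
    qed (use u in simp)
    moreover have "((\<lambda>t. \<bar>D u - D t\<bar>) \<longlongrightarrow> \<bar>D u - 0\<bar>) (at_right 0)"
      by (intro tendsto_intros lim)
    ultimately show ?thesis
      by (auto intro: tendsto_upperbound)
  qed
  then show "\<forall>\<^sub>F u in at_right 0. norm (D u) \<le> c * norm (u powr m)"
    using \<delta> b by (intro eventually_at_rightI[of 0 "min \<delta> b"]) auto
qed

lemma smallo_compose_inverse_at_top: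
  fixes E :: "real \<Rightarrow> real" and a p :: real
  assumes a: "a > 0" and E: "E \<in> o[at_right 0](\<lambda>u. u powr p)"
  shows "(\<lambda>g. E (a / g)) \<in> o[at_top](\<lambda>g. g powr (- p))"
proof -
  have "filterlim (\<lambda>g::real. a / g) (at_right 0) at_top"
    using a by real_asymp
  from landau_o.small.compose[OF E this]
  have "(\<lambda>g. E (a / g)) \<in> o[at_top](\<lambda>g. (a / g) powr p)" .
  moreover have "(\<lambda>g. (a / g) powr p) \<in> O[at_top](\<lambda>g. g powr (- p))"
    using a by real_asymp
  ultimately show ?thesis
    by (rule landau_o.small_big_trans)
qed

lemma smallo_rescaled_sum:
  fixes E1 E2 :: "real \<Rightarrow> real" and a c m :: real
  assumes a: "a > 0"
    and E1: "E1 \<in> o[at_right 0](\<lambda>u. u powr m)" and E2: "E2 \<in> o[at_right 0](\<lambda>u. u powr (m - 2))"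
  shows "(\<lambda>g. E1 (a / g) + c * (E2 (a / g) / g\<^sup>2)) \<in> o[at_top](\<lambda>g. g powr (- m))"
proof -
  have "(\<lambda>g::real. 1 / g\<^sup>2) \<in> O[at_top](\<lambda>g. g powr (- 2))"
    by real_asymp
  from landau_o.big_small_mult[OF this smallo_compose_inverse_at_top[OF a E2]]
  have "(\<lambda>g. E2 (a / g) / g\<^sup>2) \<in> o[at_top](\<lambda>g. g powr (- 2) * g powr (- (m - 2)))"
    by simp
  also have "(\<lambda>g::real. g powr (- 2) * g powr (- (m - 2))) \<in> \<Theta>[at_top](\<lambda>g. g powr (- m))"
    by real_asymp
  finally have "(\<lambda>g. c * (E2 (a / g) / g\<^sup>2)) \<in> o[at_top](\<lambda>g. g powr (- m))"
    by (rule cmult_in_smallo_iff[THEN iffD2, OF disjI2])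
  with smallo_compose_inverse_at_top[OF a E1] show ?thesis
    by (rule sum_in_smallo)
qed

lemma Gamma_minus_inverse_tendsto: "((\<lambda>p::real. Gamma p - 1 / p) \<longlongrightarrow> Digamma 1) (at_right 0)"
proof -
  have "(Gamma has_field_derivative Gamma 1 * Digamma 1) (at (1::real))"
    by (rule has_field_derivative_Gamma) simp
  then have "((\<lambda>p. (Gamma (1 + p) - Gamma 1) / p) \<longlongrightarrow> Digamma (1::real)) (at_right 0)"
    by (auto simp: DERIV_def intro: tendsto_within_subset)
  moreover have "\<forall>\<^sub>F p in at_right (0::real). (Gamma (1 + p) - Gamma 1) / p = Gamma p - 1 / p"
  proof (rule eventually_at_rightI[of 0 1])
    fix p :: real
    assume "p \<in> {0<..<1}"
    then have "p > 0" by simp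
    moreover from this have "Gamma (p + 1) = p * Gamma p"
      by (intro Gamma_plus1) auto
    ultimately show "(Gamma (1 + p) - Gamma 1) / p = Gamma p - 1 / p"
      by (simp add: field_simps add.commute)
  qed simp
  ultimately show ?thesis
    by (rule Lim_transform_eventually)
qed

definition euler_kernel :: "real \<Rightarrow> real" where
  "euler_kernel q = (if q > 0 then (exp (- q) - (if q < 1 then 1 else 0)) / q else 0)"

lemma euler_kernel_measurable [measurable]: "euler_kernel \<in> borel_measurable borel"
  unfolding euler_kernel_def[abs_def] by measurable

lemma has_bochner_integral_powr_mult_euler_kernel:
  fixes p :: real
  assumes p: "p > 0"
  shows "has_bochner_integral lborel (\<lambda>q. q powr p * euler_kernel q) (Gamma p - 1 / p)"
proof -
  have "(\<lambda>q. q powr p * euler_kernel q) = (\<lambda>q. (if q > 0 then q powr (p - 1) * exp (- 1 * q) else 0)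
      - (if 0 < q \<and> q < 1 then q powr (p - 1) else 0))"
    by (auto simp: euler_kernel_def fun_eq_iff powr_diff field_simps)
  then show ?thesis
    using has_bochner_integral_diff[OF has_bochner_integral_Gamma[OF p zero_less_one]
        has_bochner_integral_powr_unit_interval[OF p]]
    by simp
qed

lemma abs_powr_mult_euler_kernel_le:
  fixes p q :: real
  assumes p: "0 \<le> p" "p < 1"
  shows "\<bar>q powr p * euler_kernel q\<bar> \<le> (if 0 < q \<and> q < 1 then 1 else 0) + (if q > 0 then exp (- q) else 0)"
proof (cases "0 < q \<and> q < 1")
  case True
  have "\<bar>exp (- q) - 1\<bar> \<le> q"
    using exp_ge_add_one_self[of "- q"] True by simp
  then have "\<bar>q powr p * euler_kernel q\<bar> \<le> q powr p"
    using True by (simp add: euler_kernel_def abs_mult divide_le_eq mult_left_le)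
  also have "\<dots> \<le> 1"
    using True p by (simp add: powr_le1)
  finally show ?thesis
    using True by (simp add: add_increasing2)
next
  case False
  show ?thesis
  proof (cases "q > 0")
    case True
    with False have q: "q \<ge> 1" by simp
    with p have "q powr p * exp (- q) \<le> q * exp (- q)"
      using powr_mono[of p 1 q] by (intro mult_right_mono) auto
    moreover have "\<bar>q powr p * euler_kernel q\<bar> = q powr p * exp (- q) / q"
      using q by (simp add: euler_kernel_def)
    ultimately show ?thesis
      using q by (simp add: pos_divide_le_eq)
  qed (simp add: euler_kernel_def)
qed

lemma has_bochner_integral_euler_kernel: "has_bochner_integral lborel euler_kernel (Digamma 1)"
proof -
  define B where "B q = (if 0 < q \<and> q < 1 then 1 else 0) + (if q > 0 then exp (- q) else 0)"
    for q :: real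
  have "integrable lborel (\<lambda>q::real. if 0 < q \<and> q < 1 then 1 else 0 :: real)"
    "integrable lborel (\<lambda>q::real. if q > 0 then exp (- q) else 0)"
    using has_bochner_integral_powr_unit_interval[of 1] has_bochner_integral_Gamma[of 1 1]
    by (simp_all add: has_bochner_integral_iff cong: if_cong)
  then have B_int: "integrable lborel B"
    unfolding B_def[abs_def] by (rule Bochner_Integration.integrable_add)
  have bound: "\<bar>q powr p * euler_kernel q\<bar> \<le> B q" if "0 \<le> p" "p < 1" for p q
    unfolding B_def by (rule abs_powr_mult_euler_kernel_le[OF that])
  have "((\<lambda>p. LINT q|lborel. q powr p * euler_kernel q) \<longlongrightarrow> (LINT q|lborel. euler_kernel q))
      (at_right 0)"
  proof (rule integral_dominated_convergence_at[where B = B])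
    show "\<forall>\<^sub>F p in at_right 0. (\<lambda>q. q powr p * euler_kernel q) \<in> borel_measurable lborel
        \<and> (\<forall>q. \<bar>q powr p * euler_kernel q\<bar> \<le> B q)"
      using bound by (intro eventually_at_rightI[of 0 1]) auto
    show "((\<lambda>p. q powr p * euler_kernel q) \<longlongrightarrow> euler_kernel q) (at_right 0)" for q
      by (cases "q > 0") (auto simp: euler_kernel_def intro!: tendsto_eq_intros)
  qed (use B_int in auto)
  moreover have "((\<lambda>p. LINT q|lborel. q powr p * euler_kernel q) \<longlongrightarrow> Digamma 1) (at_right 0)"
  proof (rule Lim_transform_eventually[OF Gamma_minus_inverse_tendsto])
    show "\<forall>\<^sub>F p in at_right 0. Gamma p - 1 / p = (LINT q|lborel. q powr p * euler_kernel q)"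
      using has_bochner_integral_powr_mult_euler_kernel
      by (intro eventually_at_rightI[of 0 1]) (auto simp: has_bochner_integral_iff)
  qed
  ultimately have "(LINT q|lborel. euler_kernel q) = Digamma 1"
    by (rule tendsto_unique[rotated]) simp
  moreover have "\<bar>euler_kernel q\<bar> \<le> B q" for q
    using bound[of 0 q] by (cases "q = 0") (simp_all add: euler_kernel_def)
  then have "integrable lborel euler_kernel"
    by (intro integrable_abs_bound[OF B_int]) auto
  ultimately show ?thesis
    by (simp add: has_bochner_integral_iff)
qed

lemma has_bochner_integral_euler_kernel_inverse:
  "has_bochner_integral lborel (\<lambda>r. if r > 0 then euler_kernel (1 / r) / r\<^sup>2 else 0) (Digamma 1)"
proof (rule has_bochner_integral_inverse_subst)
  have "(\<lambda>q. if q > 0 then euler_kernel q else 0) = euler_kernel"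
    by (auto simp: euler_kernel_def)
  then show "has_bochner_integral lborel (\<lambda>q. if q > 0 then euler_kernel q else 0) (Digamma 1)"
    using has_bochner_integral_euler_kernel by simp
qed

text \<open>\<open>K0_integral z = 2 K\<^sub>0(2 \<surd>z)\<close>, with \<open>K\<^sub>0\<close> the modified Bessel function of the
  second kind.\<close>

definition K0_integral :: "real \<Rightarrow> real" where
  "K0_integral z = (LINT s|lborel. (if s > 0 then exp (- s - z / s) / s else 0))"

definition K0_integral_deriv :: "real \<Rightarrow> real" where
  "K0_integral_deriv z = (LINT s|lborel. (if s > 0 then - exp (- s - z / s) / s\<^sup>2 else 0))"

lemma K0_integral_integrand_le:
  fixes z s :: real
  assumes "z > 0" "s > 0"
  shows "exp (- s - z / s) / s \<le> exp (- s) / z"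
    and "exp (- s - z / s) / s\<^sup>2 \<le> 2 * exp (- s) / z\<^sup>2"
proof -
  have e: "exp (- s - z / s) = exp (- s) * exp (- (z / s))"
    by (simp flip: exp_add)
  have "exp (- (z / s)) / s \<le> 1 / z"
    using mult_exp_minus_le_1[of "z / s"] assms by (simp add: field_simps)
  from mult_left_mono[OF this, of "exp (- s)"]
  show "exp (- s - z / s) / s \<le> exp (- s) / z"
    by (simp add: e)
  have "exp (- (z / s)) / s\<^sup>2 \<le> 2 / z\<^sup>2"
    using power2_mult_exp_minus_le_2[of "z / s"] assms by (simp add: field_simps power2_eq_square)
  from mult_left_mono[OF this, of "exp (- s)"]
  show "exp (- s - z / s) / s\<^sup>2 \<le> 2 * exp (- s) / z\<^sup>2"
    by (simp add: e field_simps)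
qed

lemma integrable_K0_integral_integrand:
  fixes z :: real
  assumes z: "z > 0"
  shows "integrable lborel (\<lambda>s. if s > 0 then exp (- s - z / s) / s else 0)"
proof (rule integrable_abs_bound[where B = "\<lambda>s. 1 / z * (if s > 0 then exp (- 1 * s) else 0)"])
  show "integrable lborel (\<lambda>s. 1 / z * (if s > 0 then exp (- 1 * s) else 0))"
    using integrable_exp_minus[of 1] by simp
  show "\<bar>if s > 0 then exp (- s - z / s) / s else 0\<bar> \<le> 1 / z * (if s > 0 then exp (- 1 * s) else 0)"
    for s
    using K0_integral_integrand_le(1)[OF z, of s] by auto
qed measurable

lemma K0_integral_has_real_derivative:
  fixes z :: real
  assumes z: "z > 0"
  shows "(K0_integral has_real_derivative K0_integral_deriv z) (at z)"
  unfolding K0_integral_def[abs_def] K0_integral_deriv_def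
proof (rule has_real_derivative_integral[where a = "z / 2" and b = "2 * z"
      and B = "\<lambda>s. 2 / (z / 2)\<^sup>2 * (if s > 0 then exp (- 1 * s) else 0)"])
  show "((\<lambda>y. if s > 0 then exp (- s - y / s) / s else 0) has_real_derivative
      (if s > 0 then - exp (- s - y / s) / s\<^sup>2 else 0)) (at y)" for y s
    by (cases "s > 0") (auto intro!: derivative_eq_intros simp: power2_eq_square)
  show "\<bar>if s > 0 then - exp (- s - y / s) / s\<^sup>2 else 0\<bar>
      \<le> 2 / (z / 2)\<^sup>2 * (if s > 0 then exp (- 1 * s) else 0)" if y: "y \<in> {z / 2<..<2 * z}" for y s
  proof (cases "s > 0")
    case True
    have "2 / y\<^sup>2 \<le> 2 / (z / 2)\<^sup>2"
      using y z by (intro divide_left_mono power_mono mult_pos_pos) auto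
    from mult_right_mono[OF this, of "exp (- s)"] K0_integral_integrand_le(2)[of y s] y z True
    show ?thesis by simp
  qed simp
  show "integrable lborel (\<lambda>s. 2 / (z / 2)\<^sup>2 * (if s > 0 then exp (- 1 * s) else 0))"
    using integrable_exp_minus[of 1] by simp
qed (use z integrable_K0_integral_integrand in auto)

lemma euler_kernel_tail_eq:
  fixes z :: real
  assumes z: "0 < z" "z < 1"
  shows "integrable lborel (\<lambda>s. if s > z then exp (- s) / s else 0)"
    and "(LINT s|lborel. (if s > z then euler_kernel s else 0))
      = (LINT s|lborel. (if s > z then exp (- s) / s else 0)) + ln z"
proof -
  show int: "integrable lborel (\<lambda>s. if s > z then exp (- s) / s else 0)"
  proof (rule integrable_abs_bound[where B = "\<lambda>s. 1 / z * (if s > 0 then exp (- 1 * s) else 0)"])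
    show "\<bar>if s > z then exp (- s) / s else 0\<bar> \<le> 1 / z * (if s > 0 then exp (- 1 * s) else 0)" for s
      using z by (auto simp: field_simps intro: mult_left_mono)
  qed (use integrable_exp_minus[of 1] in auto)
  have "(\<lambda>s. if s > z then euler_kernel s else 0)
      = (\<lambda>s. (if s > z then exp (- s) / s else 0) - (if z < s \<and> s < 1 then 1 / s else 0))"
    using z by (auto simp: euler_kernel_def fun_eq_iff diff_divide_distrib)
  then show "(LINT s|lborel. (if s > z then euler_kernel s else 0))
      = (LINT s|lborel. (if s > z then exp (- s) / s else 0)) + ln z"
    using int has_bochner_integral_inverse_interval[of z 1] z
    by (simp add: has_bochner_integral_iff)
qed

lemma K0_integral_plus_ln_eq:
  fixes z :: real
  assumes z: "0 < z" "z < 1"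
  shows "K0_integral z + ln z =
    (LINT r|lborel. exp (- z * r) * (if r > 0 then euler_kernel (1 / r) / r\<^sup>2 else 0))
    + (LINT s|lborel. (if s > z then euler_kernel s else 0))"
proof -
  define K where "K s = (if s > 0 then exp (- s - z / s) / s else 0)" for s
  define E where "E s = (if s > z then exp (- s) / s else 0)" for s
  have "K (z * x) - E (z * x) = 1 / z * (exp (- z * x) * (if x > 0 then euler_kernel (1 / x) / x\<^sup>2 else 0))"
    for x
  proof (cases "x > 0")
    case True
    have "exp (- (z * x) - z / (z * x)) = exp (- (z * x)) * exp (- (1 / x))"
      using z by (simp flip: exp_add)
    moreover have "z < z * x \<longleftrightarrow> 1 < x" "1 / x < 1 \<longleftrightarrow> 1 < x"
      using z True by (auto simp: field_simps)
    ultimately show ?thesis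
      using z True by (simp add: K_def E_def euler_kernel_def field_simps power2_eq_square)
  next
    case False
    then have "\<not> z * x > 0" "\<not> z < z * x"
      using z False by (auto simp: zero_less_mult_iff)
    with False show ?thesis
      by (simp add: K_def E_def)
  qed
  then have "K0_integral z - (LINT s|lborel. E s)
      = (LINT r|lborel. exp (- z * r) * (if r > 0 then euler_kernel (1 / r) / r\<^sup>2 else 0))"
    using z integrable_K0_integral_integrand[of z] euler_kernel_tail_eq(1)[OF z]
      lborel_integral_real_affine[of z "\<lambda>s. K s - E s" 0]
    by (simp add: K0_integral_def K_def[abs_def] E_def[abs_def] integral_diff)
  with euler_kernel_tail_eq(2)[OF z] show ?thesis
    by (simp add: E_def)
qed

lemma K0_integral_plus_ln_tendsto: "((\<lambda>z. K0_integral z + ln z) \<longlongrightarrow> 2 * Digamma 1) (at_right 0)"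
proof -
  let ?k = "\<lambda>r. if r > 0 then euler_kernel (1 / r) / r\<^sup>2 else 0"
  have "((\<lambda>z. LINT r|lborel. exp (- z * r) * ?k r) \<longlongrightarrow> Digamma 1) (at_right 0)"
    using tendsto_integral_exp_damping[of ?k] has_bochner_integral_euler_kernel_inverse
    by (auto simp: has_bochner_integral_iff)
  moreover have "((\<lambda>z. LINT s|lborel. (if s > z then euler_kernel s else 0)) \<longlongrightarrow> Digamma 1) (at_right 0)"
  proof -
    have "((\<lambda>z. LINT s|lborel. (if s > z then euler_kernel s else 0))
        \<longlongrightarrow> (LINT s|lborel. euler_kernel s)) (at_right 0)"
    proof (rule integral_dominated_convergence_at[where B = "\<lambda>s. \<bar>euler_kernel s\<bar>"])
      show "((\<lambda>z. if s > z then euler_kernel s else 0) \<longlongrightarrow> euler_kernel s) (at_right 0)" for s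
      proof (rule tendsto_eventually)
        show "\<forall>\<^sub>F z in at_right 0. (if s > z then euler_kernel s else 0) = euler_kernel s"
          by (cases "s > 0") (auto simp: euler_kernel_def intro: eventually_at_rightI[of 0 s]
              eventually_at_rightI[of 0 1])
      qed
    qed (use has_bochner_integral_euler_kernel in \<open>auto simp: has_bochner_integral_iff\<close>)
    then show ?thesis
      using has_bochner_integral_euler_kernel by (simp add: has_bochner_integral_iff)
  qed
  ultimately have "((\<lambda>z. (LINT r|lborel. exp (- z * r) * ?k r)
      + (LINT s|lborel. (if s > z then euler_kernel s else 0))) \<longlongrightarrow> Digamma 1 + Digamma 1) (at_right 0)"
    by (rule tendsto_add)
  moreover have "\<forall>\<^sub>F z in at_right 0. (LINT r|lborel. exp (- z * r) * ?k r)
      + (LINT s|lborel. (if s > z then euler_kernel s else 0)) = K0_integral z + ln z"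
    by (intro eventually_at_rightI[of 0 1]) (simp_all add: K0_integral_plus_ln_eq)
  ultimately show ?thesis
    by (simp add: Lim_transform_eventually)
qed

lemma mult_K0_integral_deriv_tendsto: "((\<lambda>z. z * K0_integral_deriv z) \<longlongrightarrow> -1) (at_right 0)"
proof -
  let ?w = "\<lambda>r::real. if r > 0 then exp (- 1 * (1 / r)) / r\<^sup>2 else 0"
  have w: "has_bochner_integral lborel ?w 1"
    using has_bochner_integral_inverse_subst[OF has_bochner_integral_exp_minus[of 1]] by simp
  have eq: "- (LINT r|lborel. exp (- z * r) * ?w r) = z * K0_integral_deriv z" if z: "z > 0" for z
  proof -
    define D where "D s = (if s > 0 then - exp (- s - z / s) / s\<^sup>2 else 0)" for s
    have "D (0 + z * x) = - 1 / z\<^sup>2 * (exp (- z * x) * ?w x)" for x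
    proof (cases "x > 0")
      case True
      have "exp (- (z * x) - z / (z * x)) = exp (- z * x) * exp (- 1 * (1 / x))"
        using z by (simp flip: exp_add)
      with True z show ?thesis
        by (simp add: D_def field_simps power2_eq_square)
    qed (use z in \<open>simp add: D_def zero_less_mult_iff\<close>)
    then have "K0_integral_deriv z = \<bar>z\<bar> *\<^sub>R (LINT r|lborel. - 1 / z\<^sup>2 * (exp (- z * r) * ?w r))"
      using lborel_integral_real_affine[of z D 0] z by (simp add: K0_integral_deriv_def D_def[abs_def])
    then show ?thesis
      using z by (simp add: power2_eq_square)
  qed
  have "((\<lambda>z. - (LINT r|lborel. exp (- z * r) * ?w r)) \<longlongrightarrow> -1) (at_right 0)"
    using tendsto_minus[OF tendsto_integral_exp_damping[of ?w]] w
    by (auto simp: has_bochner_integral_iff)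
  moreover have "\<forall>\<^sub>F z in at_right 0. - (LINT r|lborel. exp (- z * r) * ?w r) = z * K0_integral_deriv z"
    using eq by (intro eventually_at_rightI[of 0 1]) auto
  ultimately show ?thesis
    by (rule Lim_transform_eventually)
qed

lemma K0_integral_scaled_tendsto:
  assumes m: "m > 0"
  shows "((\<lambda>u. K0_integral (m\<^sup>2 * u) + ln (m\<^sup>2 * u)) \<longlongrightarrow> 2 * Digamma 1) (at_right 0)"
    and "((\<lambda>u. m\<^sup>2 * u * K0_integral_deriv (m\<^sup>2 * u)) \<longlongrightarrow> -1) (at_right 0)"
proof -
  have "filterlim (\<lambda>u. m\<^sup>2 * u) (at_right 0) (at_right (0::real))"
    using m by real_asymp
  from filterlim_compose[OF K0_integral_plus_ln_tendsto this] filterlim_compose[OF mult_K0_integral_deriv_tendsto this]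
  show "((\<lambda>u. K0_integral (m\<^sup>2 * u) + ln (m\<^sup>2 * u)) \<longlongrightarrow> 2 * Digamma 1) (at_right 0)"
    and "((\<lambda>u. m\<^sup>2 * u * K0_integral_deriv (m\<^sup>2 * u)) \<longlongrightarrow> -1) (at_right 0)"
    by simp_all
qed

definition gamma_coeff :: "real \<Rightarrow> real" where
  "gamma_coeff k = k powr k / Gamma k"

lemma gamma_dens_pos_eq:
  "t > 0 \<Longrightarrow> gamma_dens k t = gamma_coeff k * t powr (k - 1) * exp (- k * t)"
  by (simp add: gamma_dens_def gamma_coeff_def)

lemma gamma_dens_nonneg: "k > 0 \<Longrightarrow> gamma_dens k t \<ge> 0"
  by (simp add: gamma_dens_def)

lemma gamma_dens_measurable [measurable]: "gamma_dens k \<in> borel_measurable borel"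
  unfolding gamma_dens_def[abs_def] by measurable

lemma has_bochner_integral_gamma_dens_moment:
  fixes k :: real and j :: nat
  assumes k: "k > 0"
  shows "has_bochner_integral lborel (\<lambda>t. t ^ j * gamma_dens k t) (Gamma (k + j) / (Gamma k * k ^ j))"
proof -
  have "t powr (k + j - 1) = t ^ j * t powr (k - 1)" if "t > 0" for t
    using that by (simp add: powr_add[symmetric] powr_realpow[symmetric] algebra_simps)
  then have "t ^ j * gamma_dens k t
      = k powr k / Gamma k * (if t > 0 then t powr (k + j - 1) * exp (- k * t) else 0)" for t
    by (cases "t > 0") (simp_all add: gamma_dens_def)
  moreover have "k powr k / Gamma k * (Gamma (k + j) / k powr (k + j)) = Gamma (k + j) / (Gamma k * k ^ j)"
    using k by (simp add: powr_add powr_realpow field_simps)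
  ultimately show ?thesis
    using has_bochner_integral_mult_right[OF has_bochner_integral_Gamma[of "k + j" k], of "k powr k / Gamma k"] k
    by simp
qed

lemma gamma_dens_moments:
  fixes k :: real
  assumes k: "k > 0"
  shows "has_bochner_integral lborel (gamma_dens k) 1"
    and "has_bochner_integral lborel (\<lambda>t. t * gamma_dens k t) 1"
    and "has_bochner_integral lborel (\<lambda>t. t\<^sup>2 * gamma_dens k t) ((k + 1) / k)"
proof -
  have G0: "Gamma k \<noteq> 0"
    using Gamma_real_pos[OF k] by simp
  have G1: "Gamma (k + 1) = k * Gamma k"
    using k by (intro Gamma_plus1) auto
  have "Gamma ((k + 1) + 1) = (k + 1) * Gamma (k + 1)"
    using k by (intro Gamma_plus1) auto
  then have G2: "Gamma (k + 2) = (k + 1) * k * Gamma k"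
    by (simp add: G1 add.assoc)
  show "has_bochner_integral lborel (gamma_dens k) 1"
    using has_bochner_integral_gamma_dens_moment[OF k, of 0] G0 by simp
  show "has_bochner_integral lborel (\<lambda>t. t * gamma_dens k t) 1"
    using has_bochner_integral_gamma_dens_moment[OF k, of 1] G0 k by (simp add: G1)
  have "Gamma (k + 2) / (Gamma k * k\<^sup>2) = (k + 1) / k"
    using G0 k by (simp add: G2 power2_eq_square)
  then show "has_bochner_integral lborel (\<lambda>t. t\<^sup>2 * gamma_dens k t) ((k + 1) / k)"
    using has_bochner_integral_gamma_dens_moment[OF k, of 2] by simp
qed

lemma integrable_gamma_dens: "k > 0 \<Longrightarrow> integrable lborel (gamma_dens k)"
  using gamma_dens_moments(1) by (auto simp: has_bochner_integral_iff)

lemma mult_gamma_dens_le: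
  assumes k: "k > 0"
  shows "t * gamma_dens k t \<le> gamma_coeff k"
proof (cases "t > 0")
  case True
  have "t * gamma_dens k t = gamma_coeff k * (t * exp (- t)) powr k"
    using True by (simp add: gamma_dens_pos_eq powr_mult exp_powr_real powr_diff field_simps)
  also have "\<dots> \<le> gamma_coeff k * 1"
    using True k mult_exp_minus_le_1[of t]
    by (intro mult_left_mono powr_le1) (auto simp: gamma_coeff_def intro: less_imp_le)
  finally show ?thesis by simp
qed (use k in \<open>simp add: gamma_dens_def gamma_coeff_def\<close>)

lemma gamma_dens_continuous_on:
  assumes a: "a > 0"
  shows "continuous_on {a..b} (gamma_dens k)"
proof -
  have "continuous_on {a..b} (\<lambda>t. gamma_coeff k * t powr (k - 1) * exp (- k * t))"
    using a by (intro continuous_intros) auto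
  then show ?thesis
    by (rule continuous_on_cong[THEN iffD1, rotated 2]) (use a in \<open>auto simp: gamma_dens_pos_eq\<close>)
qed

definition gamma_cdf :: "real \<Rightarrow> real \<Rightarrow> real" where
  "gamma_cdf k v = (LINT t|lborel. indicator {..v} t * gamma_dens k t)"

lemma integrable_indicator_gamma_dens:
  "k > 0 \<Longrightarrow> A \<in> sets borel \<Longrightarrow> integrable lborel (\<lambda>t. indicator A t * gamma_dens k t)"
  by (rule integrable_abs_bound[OF integrable_gamma_dens]) (auto simp: gamma_dens_nonneg indicator_def)

lemma gamma_cdf_nonneg: "k > 0 \<Longrightarrow> gamma_cdf k v \<ge> 0"
  unfolding gamma_cdf_def by (intro integral_nonneg_AE AE_I2) (simp add: gamma_dens_nonneg)

lemma gamma_cdf_le_1: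
  assumes k: "k > 0"
  shows "gamma_cdf k v \<le> 1"
proof -
  have "gamma_cdf k v \<le> (LINT t|lborel. gamma_dens k t)"
    unfolding gamma_cdf_def using k
    by (intro integral_mono integrable_indicator_gamma_dens integrable_gamma_dens)
       (auto simp: indicator_def gamma_dens_nonneg)
  with gamma_dens_moments(1)[OF k] show ?thesis
    by (simp add: has_bochner_integral_iff)
qed

lemma gamma_cdf_mono: "k > 0 \<Longrightarrow> v \<le> w \<Longrightarrow> gamma_cdf k v \<le> gamma_cdf k w"
  unfolding gamma_cdf_def
  by (intro integral_mono integrable_indicator_gamma_dens) (auto simp: indicator_def gamma_dens_nonneg)

lemma gamma_cdf_measurable [measurable]: "k > 0 \<Longrightarrow> gamma_cdf k \<in> borel_measurable borel"
  by (rule borel_measurable_mono) (auto simp: mono_def gamma_cdf_mono)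

lemma gamma_cdf_has_real_derivative:
  assumes k: "k > 0" and v: "v > 0"
  shows "(gamma_cdf k has_real_derivative gamma_dens k v) (at v)"
proof -
  define a where "a = v / 2"
  have a: "0 < a" "a < v" "v < 2 * v"
    using v by (auto simp: a_def)
  define C where "C = (LINT t|lborel. indicator {..<a} t * gamma_dens k t)"
  have cdf_eq: "gamma_cdf k w = C + integral {a..w} (gamma_dens k)" if "a \<le> w" for w
  proof -
    have "(\<lambda>t. indicator {..w} t * gamma_dens k t)
        = (\<lambda>t. indicator {..<a} t * gamma_dens k t + indicator {a..w} t * gamma_dens k t)"
      using that by (auto simp: indicator_def fun_eq_iff)
    then have "gamma_cdf k w = C + (LINT t|lborel. indicator {a..w} t * gamma_dens k t)"
      unfolding gamma_cdf_def C_def using k by (simp add: integrable_indicator_gamma_dens)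
    also have "(LINT t|lborel. indicator {a..w} t * gamma_dens k t) = integral {a..w} (gamma_dens k)"
      using set_borel_integral_eq_integral(2)[OF borel_integrable_atLeastAtMost'
          [OF gamma_dens_continuous_on[OF a(1)]]]
      by (simp add: set_lebesgue_integral_def)
    finally show ?thesis .
  qed
  have "((\<lambda>w. integral {a..w} (gamma_dens k)) has_real_derivative gamma_dens k v) (at v within {a..2 * v})"
    using integral_has_real_derivative[OF gamma_dens_continuous_on[OF a(1), of "2 * v" k], of v] a
    by auto
  from DERIV_add[OF DERIV_const[of C] this]
  have "((\<lambda>w. C + integral {a..w} (gamma_dens k)) has_real_derivative gamma_dens k v) (at v within {a..2 * v})"
    by simp
  moreover have "at v within {a..2 * v} = at v"
    using a by (intro at_within_Icc_at) auto
  ultimately have "((\<lambda>w. C + integral {a..w} (gamma_dens k)) has_real_derivative gamma_dens k v) (at v)"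
    by simp
  then show ?thesis
    by (rule has_field_derivative_transform_within_open[of _ _ _ "{a<..<2 * v}"])
       (use a cdf_eq in auto)
qed

lemma gamma_cdf_tendsto_0:
  assumes k: "k > 0"
  shows "(gamma_cdf k \<longlongrightarrow> 0) (at_right 0)"
proof -
  have "((\<lambda>v. LINT t|lborel. indicator {..v} t * gamma_dens k t) \<longlongrightarrow> (LINT t::real|lborel. 0)) (at_right 0)"
  proof (rule integral_dominated_convergence_at[where B = "gamma_dens k"])
    show "((\<lambda>v. indicator {..v} t * gamma_dens k t) \<longlongrightarrow> 0) (at_right 0)" for t
    proof (cases "t > 0")
      case True
      then have "\<forall>\<^sub>F v in at_right 0. indicator {..v} t * gamma_dens k t = 0"
        by (intro eventually_at_rightI[of 0 t]) (auto simp: indicator_def)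
      then show ?thesis
        by (rule tendsto_eventually)
    qed (simp add: gamma_dens_def)
  qed (use k integrable_gamma_dens in \<open>auto simp: indicator_def gamma_dens_nonneg\<close>)
  then show ?thesis
    by (simp add: gamma_cdf_def[abs_def])
qed

lemma genK_cdf_scale:
  assumes g: "g > 0"
  shows "genK_cdf k m g y = genK_cdf k m 1 (y / g)"
proof -
  have "indicator {..y} (g * s * t) = (indicator {..y / g} (1 * s * t) :: real)" for s t
    using g by (simp add: indicator_def le_divide_eq ac_simps)
  then show ?thesis
    by (simp add: genK_cdf_def)
qed

lemma genK_cdf_unit_eq: "genK_cdf k m 1 u = (LINT s|lborel. gamma_dens k s * gamma_cdf m (u / s))"
proof -
  have "(LINT t|lborel. indicator {..u} (1 * s * t) * gamma_dens k s * gamma_dens m t)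
      = gamma_dens k s * gamma_cdf m (u / s)" for s
  proof (cases "s > 0")
    case True
    then have "(\<lambda>t. indicator {..u} (1 * s * t) * gamma_dens k s * gamma_dens m t)
        = (\<lambda>t. gamma_dens k s * (indicator {..u / s} t * gamma_dens m t))"
      by (auto simp: indicator_def le_divide_eq ac_simps)
    then show ?thesis
      by (simp add: gamma_cdf_def)
  qed (simp add: gamma_dens_def)
  then show ?thesis
    by (simp add: genK_cdf_def)
qed

definition genK_pdf :: "real \<Rightarrow> real \<Rightarrow> real \<Rightarrow> real" where
  "genK_pdf k m u = (LINT s|lborel. gamma_dens k s * gamma_dens m (u / s) / s)"

lemma genK_pdf_integrand_le:
  assumes k: "k > 0" and m: "m > 0" and v: "v > 0"
  shows "\<bar>gamma_dens k s * gamma_dens m (v / s) / s\<bar> \<le> gamma_coeff m / v * gamma_dens k s"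
proof (cases "s > 0")
  case True
  have "\<bar>gamma_dens k s * gamma_dens m (v / s) / s\<bar> = gamma_dens k s / v * (v / s * gamma_dens m (v / s))"
    using True v gamma_dens_nonneg[OF k] gamma_dens_nonneg[OF m] by (simp add: abs_mult)
  also have "\<dots> \<le> gamma_dens k s / v * gamma_coeff m"
    using v gamma_dens_nonneg[OF k, of s] by (intro mult_left_mono mult_gamma_dens_le[OF m]) auto
  finally show ?thesis
    by (simp add: mult.commute)
qed (simp add: gamma_dens_def)

lemma genK_cdf_has_real_derivative:
  assumes k: "k > 0" and m: "m > 0" and u: "u > 0"
  shows "(genK_cdf k m 1 has_real_derivative genK_pdf k m u) (at u)"
proof -
  have "((\<lambda>u. LINT s|lborel. gamma_dens k s * gamma_cdf m (u / s)) has_real_derivative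
      (LINT s|lborel. gamma_dens k s * gamma_dens m (u / s) / s)) (at u)"
  proof (rule has_real_derivative_integral[where a = "u / 2" and b = "2 * u"
        and B = "\<lambda>s. gamma_coeff m / (u / 2) * gamma_dens k s"])
    show "integrable lborel (\<lambda>s. gamma_dens k s * gamma_cdf m (v / s))" for v
      using gamma_cdf_nonneg[OF m] gamma_cdf_le_1[OF m] gamma_dens_nonneg[OF k] m
      by (intro integrable_abs_bound[OF integrable_gamma_dens[OF k]])
         (auto simp: abs_mult intro: mult_left_le)
    show "((\<lambda>v. gamma_dens k s * gamma_cdf m (v / s)) has_real_derivative
        gamma_dens k s * gamma_dens m (v / s) / s) (at v)" if "v \<in> {u / 2<..<2 * u}" for v s
    proof (cases "s > 0")
      case True
      with that u have "v / s > 0" by auto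
      moreover have "((\<lambda>v. v / s) has_real_derivative 1 / s) (at v)"
        using True by (auto intro!: derivative_eq_intros)
      ultimately have "((\<lambda>v. gamma_cdf m (v / s)) has_real_derivative gamma_dens m (v / s) * (1 / s)) (at v)"
        by (rule DERIV_chain2[OF gamma_cdf_has_real_derivative[OF m]])
      from DERIV_cmult[OF this, of "gamma_dens k s"] show ?thesis
        by simp
    qed (simp add: gamma_dens_def)
    show "\<bar>gamma_dens k s * gamma_dens m (v / s) / s\<bar> \<le> gamma_coeff m / (u / 2) * gamma_dens k s"
      if "v \<in> {u / 2<..<2 * u}" for v s
    proof -
      have "gamma_coeff m / v \<le> gamma_coeff m / (u / 2)"
        using that u m by (intro divide_left_mono) (auto simp: gamma_coeff_def)
      from mult_right_mono[OF this gamma_dens_nonneg[OF k, of s]] genK_pdf_integrand_le[OF k m, of v s] that u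
      show ?thesis
        by simp
    qed
    show "integrable lborel (\<lambda>s. gamma_coeff m / (u / 2) * gamma_dens k s)"
      using integrable_gamma_dens[OF k] by simp
  qed (use u m in auto)
  then show ?thesis
    by (simp add: genK_cdf_unit_eq[abs_def] genK_pdf_def)
qed

lemma genK_cdf_tendsto_0:
  assumes k: "k > 0" and m: "m > 0"
  shows "(genK_cdf k m 1 \<longlongrightarrow> 0) (at_right 0)"
proof -
  have "((\<lambda>u. LINT s|lborel. gamma_dens k s * gamma_cdf m (u / s)) \<longlongrightarrow> (LINT s::real|lborel. 0))
      (at_right 0)"
  proof (rule integral_dominated_convergence_at[where B = "gamma_dens k"])
    show "((\<lambda>u. gamma_dens k s * gamma_cdf m (u / s)) \<longlongrightarrow> 0) (at_right 0)" for s
    proof (cases "s > 0")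
      case True
      then have "filterlim (\<lambda>u. u / s) (at_right 0) (at_right 0)"
        by real_asymp
      from filterlim_compose[OF gamma_cdf_tendsto_0[OF m] this]
      show ?thesis
        using tendsto_mult[OF tendsto_const[of "gamma_dens k s"]] by fastforce
    qed (simp add: gamma_dens_def)
    show "\<forall>\<^sub>F u in at_right 0. (\<lambda>s. gamma_dens k s * gamma_cdf m (u / s)) \<in> borel_measurable lborel
        \<and> (\<forall>s. \<bar>gamma_dens k s * gamma_cdf m (u / s)\<bar> \<le> gamma_dens k s)"
      using m gamma_cdf_nonneg[OF m] gamma_cdf_le_1[OF m] gamma_dens_nonneg[OF k]
      by (intro always_eventually allI conjI) (auto simp: abs_mult intro: mult_left_le)
  qed (use k integrable_gamma_dens in auto)
  then show ?thesis
    by (simp add: genK_cdf_unit_eq[abs_def])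
qed

lemma genK_var_eq:
  assumes k: "k > 0" and m: "m > 0"
  shows "genK_var k m g = g\<^sup>2 * ((k + 1) * (m + 1) / (k * m) - 1)"
proof -
  note mk = gamma_dens_moments[OF k, unfolded has_bochner_integral_iff]
  note mm = gamma_dens_moments[OF m, unfolded has_bochner_integral_iff]
  have "(LINT t|lborel. (g * s * t - g)\<^sup>2 * gamma_dens k s * gamma_dens m t)
      = g\<^sup>2 * ((m + 1) / m * (s\<^sup>2 * gamma_dens k s) - 2 * (s * gamma_dens k s) + gamma_dens k s)" for s
  proof -
    have "(\<lambda>t. (g * s * t - g)\<^sup>2 * gamma_dens k s * gamma_dens m t)
        = (\<lambda>t. g\<^sup>2 * gamma_dens k s * (s\<^sup>2 * (t\<^sup>2 * gamma_dens m t) - 2 * s * (t * gamma_dens m t)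
            + gamma_dens m t))"
      by (auto simp: fun_eq_iff power2_eq_square algebra_simps)
    then have "(LINT t|lborel. (g * s * t - g)\<^sup>2 * gamma_dens k s * gamma_dens m t)
        = g\<^sup>2 * gamma_dens k s * (s\<^sup>2 * (LINT t|lborel. t\<^sup>2 * gamma_dens m t)
            - 2 * s * (LINT t|lborel. t * gamma_dens m t) + (LINT t|lborel. gamma_dens m t))"
      using mm by (simp add: integral_add integral_diff)
    then show ?thesis
      using mm by (simp add: algebra_simps)
  qed
  then have "genK_var k m g
      = (LINT s|lborel. g\<^sup>2 * ((m + 1) / m * (s\<^sup>2 * gamma_dens k s) - 2 * (s * gamma_dens k s)
          + gamma_dens k s))"
    by (simp add: genK_var_def)
  also have "\<dots> = g\<^sup>2 * ((m + 1) / m * (LINT s|lborel. s\<^sup>2 * gamma_dens k s)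
      - 2 * (LINT s|lborel. s * gamma_dens k s) + (LINT s|lborel. gamma_dens k s))"
    using mk by (simp add: integral_add integral_diff)
  also have "\<dots> = g\<^sup>2 * ((k + 1) * (m + 1) / (k * m) - 1)"
  proof -
    have I: "(LINT s|lborel. gamma_dens k s) = 1" "(LINT s|lborel. s * gamma_dens k s) = 1"
      "(LINT s|lborel. s\<^sup>2 * gamma_dens k s) = (k + 1) / k"
      using mk by auto
    show ?thesis
      unfolding I using k m by (simp add: field_simps)
  qed
  finally show ?thesis .
qed

lemma genK_pdf_eq_K0_integral:
  assumes m: "m > 0" and u: "u > 0"
  shows "genK_pdf m m u = (gamma_coeff m)\<^sup>2 * u powr (m - 1) * K0_integral (m\<^sup>2 * u)"
proof -
  define h where "h s = (if s > 0 then exp (- m * s - m * u / s) / s else 0)" for s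
  have "gamma_dens m s * gamma_dens m (u / s) / s = (gamma_coeff m)\<^sup>2 * u powr (m - 1) * h s" for s
  proof (cases "s > 0")
    case True
    have "exp (- m * s) * exp (- m * (u / s)) = exp (- m * s - m * u / s)"
      by (simp flip: exp_add)
    with True u show ?thesis
      by (simp add: gamma_dens_pos_eq h_def powr_divide power2_eq_square field_simps)
  qed (simp add: gamma_dens_def h_def)
  moreover have "(LINT s|lborel. h s) = K0_integral (m\<^sup>2 * u)"
  proof -
    have "h (0 + 1 / m * x) = m * (if x > 0 then exp (- x - m\<^sup>2 * u / x) / x else 0)" for x
      using m by (simp add: h_def zero_less_divide_iff power2_eq_square field_simps)
    then show ?thesis
      using lborel_integral_real_affine[of "1 / m" h 0] m by (simp add: K0_integral_def)
  qed
  ultimately show ?thesis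
    by (simp add: genK_pdf_def)
qed

definition genK_pdf_deriv :: "real \<Rightarrow> real \<Rightarrow> real" where
  "genK_pdf_deriv m u = (gamma_coeff m)\<^sup>2 *
     ((m - 1) * u powr (m - 2) * K0_integral (m\<^sup>2 * u) + m\<^sup>2 * u powr (m - 1) * K0_integral_deriv (m\<^sup>2 * u))"

lemma genK_pdf_has_real_derivative:
  assumes m: "m > 0" and u: "u > 0"
  shows "(genK_pdf m m has_real_derivative genK_pdf_deriv m u) (at u)"
proof -
  have "((\<lambda>u. K0_integral (m\<^sup>2 * u)) has_real_derivative K0_integral_deriv (m\<^sup>2 * u) * m\<^sup>2) (at u)"
    using m u by (intro DERIV_chain2[OF K0_integral_has_real_derivative]) (auto intro!: derivative_eq_intros)
  then have "((\<lambda>u. (gamma_coeff m)\<^sup>2 * u powr (m - 1) * K0_integral (m\<^sup>2 * u)) has_real_derivative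
      genK_pdf_deriv m u) (at u)"
    using u by (auto intro!: derivative_eq_intros simp: genK_pdf_deriv_def algebra_simps)
  then show ?thesis
    by (rule has_field_derivative_transform_within_open[of _ _ _ "{0<..}"])
       (use m u genK_pdf_eq_K0_integral in auto)
qed

definition genK_cdf_approx :: "real \<Rightarrow> real \<Rightarrow> real" where
  "genK_cdf_approx m u = (gamma_coeff m)\<^sup>2 * u powr m / m * (2 * Digamma 1 + 1 / m - ln (m\<^sup>2 * u))"

definition genK_pdf_deriv_approx :: "real \<Rightarrow> real \<Rightarrow> real" where
  "genK_pdf_deriv_approx m u =
     (gamma_coeff m)\<^sup>2 * u powr (m - 2) * ((m - 1) * (2 * Digamma 1 - ln (m\<^sup>2 * u)) - 1)"

lemma genK_cdf_asymptotics:
  assumes m: "m > 0"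
  shows "(\<lambda>u. genK_cdf m m 1 u - genK_cdf_approx m u) \<in> o[at_right 0](\<lambda>u. u powr m)"
proof (rule smallo_at_right_0_from_deriv[OF m zero_less_one])
  define L where "L u = (gamma_coeff m)\<^sup>2 * u powr (m - 1) * (2 * Digamma 1 - ln (m\<^sup>2 * u))" for u
  show "((\<lambda>u. genK_cdf m m 1 u - genK_cdf_approx m u) has_real_derivative genK_pdf m m u - L u) (at u)"
    if "0 < u" "u < 1" for u
  proof (intro DERIV_diff genK_cdf_has_real_derivative)
    have "u powr m = u * u powr (m - 1)"
      using that by (simp add: powr_diff)
    then show "(genK_cdf_approx m has_real_derivative L u) (at u)"
      unfolding genK_cdf_approx_def[abs_def] L_def using m that
      by (auto intro!: derivative_eq_intros simp: field_simps power2_eq_square)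
  qed (use m that in auto)
  show "((\<lambda>u. genK_cdf m m 1 u - genK_cdf_approx m u) \<longlongrightarrow> 0) (at_right 0)"
  proof -
    have "(genK_cdf_approx m \<longlongrightarrow> 0) (at_right 0)"
      unfolding genK_cdf_approx_def[abs_def] using m by real_asymp
    from tendsto_diff[OF genK_cdf_tendsto_0[OF m m] this] show ?thesis
      by simp
  qed
  show "(\<lambda>u. genK_pdf m m u - L u) \<in> o[at_right 0](\<lambda>u. u powr (m - 1))"
  proof (rule smalloI_tendsto)
    define R where "R u = (gamma_coeff m)\<^sup>2 * ((K0_integral (m\<^sup>2 * u) + ln (m\<^sup>2 * u)) - 2 * Digamma 1)"
      for u
    have "(R \<longlongrightarrow> (gamma_coeff m)\<^sup>2 * (2 * Digamma 1 - 2 * Digamma 1)) (at_right 0)"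
      unfolding R_def by (intro tendsto_intros K0_integral_scaled_tendsto m)
    then have "(R \<longlongrightarrow> 0) (at_right 0)"
      by simp
    moreover have "\<forall>\<^sub>F u in at_right 0. R u = (genK_pdf m m u - L u) / u powr (m - 1)"
      using m by (intro eventually_at_rightI[of 0 1])
        (auto simp: R_def genK_pdf_eq_K0_integral L_def field_simps)
    ultimately show "((\<lambda>u. (genK_pdf m m u - L u) / u powr (m - 1)) \<longlongrightarrow> 0) (at_right 0)"
      by (rule Lim_transform_eventually)
  qed (intro eventually_at_rightI[of 0 1], simp_all)
qed

lemma genK_pdf_deriv_asymptotics:
  assumes m: "m > 0"
  shows "(\<lambda>u. genK_pdf_deriv m u - genK_pdf_deriv_approx m u) \<in> o[at_right 0](\<lambda>u. u powr (m - 2))"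
proof (rule smalloI_tendsto)
  define R where "R u = (gamma_coeff m)\<^sup>2 *
      ((m - 1) * ((K0_integral (m\<^sup>2 * u) + ln (m\<^sup>2 * u)) - 2 * Digamma 1)
        + (m\<^sup>2 * u * K0_integral_deriv (m\<^sup>2 * u) + 1))" for u
  have "(R \<longlongrightarrow> (gamma_coeff m)\<^sup>2 * ((m - 1) * (2 * Digamma 1 - 2 * Digamma 1) + (-1 + 1))) (at_right 0)"
    unfolding R_def by (intro tendsto_intros K0_integral_scaled_tendsto m)
  then have "(R \<longlongrightarrow> 0) (at_right 0)"
    by simp
  moreover have "\<forall>\<^sub>F u in at_right 0. R u = (genK_pdf_deriv m u - genK_pdf_deriv_approx m u) / u powr (m - 2)"
  proof (rule eventually_at_rightI[of 0 1])
    fix u :: real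
    assume "u \<in> {0<..<1}"
    then have "u powr (m - 2) > 0" "u powr (m - 1) = u * u powr (m - 2)"
      using powr_add[of u 1 "m - 2"] by simp_all
    then show "R u = (genK_pdf_deriv m u - genK_pdf_deriv_approx m u) / u powr (m - 2)"
      by (simp add: R_def genK_pdf_deriv_def genK_pdf_deriv_approx_def field_simps)
  qed simp
  ultimately show "((\<lambda>u. (genK_pdf_deriv m u - genK_pdf_deriv_approx m u) / u powr (m - 2)) \<longlongrightarrow> 0)
      (at_right 0)"
    by (rule Lim_transform_eventually)
qed (intro eventually_at_rightI[of 0 1], simp_all)

lemma genK_cdf_approx_eq:
  fixes m a g :: real
  assumes m: "m > 0" and a: "a > 0" and g: "g > 0"
  shows "g powr (- m) * ((Digamma (m + 1) + 2 * Digamma 1 - Digamma m - ln (m\<^sup>2 * a / g))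
           / (m powr (- 2 * m + 1) * (Gamma m)\<^sup>2 * a powr (- m)))
         = genK_cdf_approx m (a / g)"
proof -
  define P A G where "P = m powr m" and "A = a powr m" and "G = g powr m"
  have "Digamma (m + 1) = Digamma m + 1 / m"
    using m by (intro Digamma_plus1) simp
  moreover have "m powr (- 2 * m + 1) = m / P\<^sup>2"
    using m by (simp add: P_def power2_eq_square powr_add[symmetric] powr_minus field_simps)
  moreover have "g powr (- m) = 1 / G" "a powr (- m) = 1 / A"
    by (simp_all add: A_def G_def powr_minus divide_inverse)
  moreover have "(a / g) powr m = A / G"
    by (simp add: A_def G_def powr_divide)
  ultimately have "?thesis \<longleftrightarrow> 1 / G * ((Digamma m + 1 / m + 2 * Digamma 1 - Digamma m - ln (m\<^sup>2 * a / g))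
      / (m / P\<^sup>2 * (Gamma m)\<^sup>2 * (1 / A)))
      = (P / Gamma m)\<^sup>2 * (A / G) / m * (2 * Digamma 1 + 1 / m - ln (m\<^sup>2 * (a / g)))"
    by (simp add: genK_cdf_approx_def gamma_coeff_def P_def)
  moreover have "P > 0" "A > 0" "G > 0" "Gamma m > 0"
    using m a g by (simp_all add: P_def A_def G_def Gamma_real_pos)
  ultimately show ?thesis
    using m by (simp add: field_simps power2_eq_square)
qed

lemma genK_pdf_deriv_approx_eq:
  fixes m a g lam ge ce :: real
  assumes m: "m > 0" "m \<noteq> 1" and a: "a > 0" and g: "g > 0" and lam: "lam > 0" and ge: "ge > 0"
  shows "g powr (- m) * (ce * (Digamma (m - 1) + 2 * Digamma 1 - Digamma m - ln (m\<^sup>2 * a / g))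
           / (2 * m powr (- 2 * m) * lam powr (-2) * ge powr (-2)
              * Gamma m * Gamma (m - 1) * a powr (2 - m)))
         = ge\<^sup>2 * ce / 2 * (lam / g)\<^sup>2 * genK_pdf_deriv_approx m (a / g)"
proof -
  define P A G where "P = m powr m" and "A = a powr m" and "G = g powr m"
  have "m - 1 \<notin> \<int>\<^sub>\<le>\<^sub>0"
  proof
    assume "m - 1 \<in> \<int>\<^sub>\<le>\<^sub>0"
    then obtain n :: nat where "m - 1 = - real n"
      by (elim nonpos_Ints_cases')
    with m show False
      by (cases n) auto
  qed
  from Gamma_plus1[OF this] have "Gamma (m - 1) = Gamma m / (m - 1)"
    using m by (simp add: field_simps)
  moreover have "Digamma (m - 1) = Digamma m - 1 / (m - 1)"
    using Digamma_plus1[of "m - 1"] m by simp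
  moreover have "m powr (- 2 * m) = 1 / P\<^sup>2"
    using m by (simp add: P_def power2_eq_square powr_add[symmetric] powr_minus field_simps)
  moreover have "g powr (- m) = 1 / G" "lam powr (-2) = 1 / lam\<^sup>2" "ge powr (-2) = 1 / ge\<^sup>2"
    using lam ge by (simp_all add: G_def powr_minus divide_inverse)
  moreover have "a powr (2 - m) = a\<^sup>2 / A" "(a / g) powr (m - 2) = A / G / (a / g)\<^sup>2"
    using a g by (simp_all add: A_def G_def powr_diff powr_divide power_divide)
  ultimately have "?thesis \<longleftrightarrow>
      1 / G * (ce * (Digamma m - 1 / (m - 1) + 2 * Digamma 1 - Digamma m - ln (m\<^sup>2 * a / g))
        / (2 * (1 / P\<^sup>2) * (1 / lam\<^sup>2) * (1 / ge\<^sup>2) * Gamma m * (Gamma m / (m - 1)) * (a\<^sup>2 / A)))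
      = ge\<^sup>2 * ce / 2 * (lam / g)\<^sup>2 * ((P / Gamma m)\<^sup>2 * (A / G / (a / g)\<^sup>2)
          * ((m - 1) * (2 * Digamma 1 - ln (m\<^sup>2 * (a / g))) - 1))"
    by (simp add: genK_pdf_deriv_approx_def gamma_coeff_def P_def)
  moreover have "P > 0" "A > 0" "G > 0" "Gamma m > 0" "m - 1 \<noteq> 0"
    using m a g by (simp_all add: P_def A_def G_def Gamma_real_pos)
  ultimately show ?thesis
    using a g lam ge by (simp add: field_simps power2_eq_square)
qed

lemma sop_approx_eq:
  fixes lam m g ge :: real
  assumes m: "m > 0" and g: "g > 0" and lam: "lam > 0" and pos: "lam - 1 + lam * ge > 0"
  defines "u \<equiv> \<lambda>x. (lam - 1 + lam * x) / g"
  shows "sop_approx lam m m g ke me ge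
    = genK_cdf m m 1 (u ge) + genK_var ke me ge / 2 * (lam / g)\<^sup>2 * genK_pdf_deriv m (u ge)"
proof -
  define S where "S = {(1 - lam) / lam<..}"
  have S: "open S" "ge \<in> S" and u_pos: "\<And>x. x \<in> S \<Longrightarrow> u x > 0"
    using lam g pos by (auto simp: S_def u_def field_simps)
  have u_deriv: "(u has_real_derivative lam / g) (at x)" for x
    unfolding u_def using g by (auto intro!: derivative_eq_intros)
  define P where "P x = genK_cdf m m g (lam - 1 + lam * x)" for x
  have P_eq: "P x = genK_cdf m m 1 (u x)" for x
    by (simp add: P_def u_def genK_cdf_scale[OF g])
  have "(P has_real_derivative genK_pdf m m (u x) * (lam / g)) (at x)" if "x \<in> S" for x
    unfolding P_eq[abs_def]
    using DERIV_chain2[OF genK_cdf_has_real_derivative[OF m m u_pos[OF that]] u_deriv] .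
  then have dP: "genK_pdf m m (u x) * (lam / g) = deriv P x" if "x \<in> S" for x
    using that by (metis DERIV_imp_deriv)
  have "((\<lambda>x. genK_pdf m m (u x) * (lam / g)) has_real_derivative
      genK_pdf_deriv m (u ge) * (lam / g) * (lam / g)) (at ge)"
    using DERIV_chain2[OF genK_pdf_has_real_derivative[OF m u_pos[OF S(2)]] u_deriv]
    by (rule DERIV_cmult_right)
  then have "(deriv P has_real_derivative genK_pdf_deriv m (u ge) * (lam / g) * (lam / g)) (at ge)"
    by (rule has_field_derivative_transform_within_open[OF _ S dP])
  then have "deriv (deriv P) ge = genK_pdf_deriv m (u ge) * (lam / g) * (lam / g)"
    by (rule DERIV_imp_deriv)
  moreover have "sop_approx lam m m g ke me ge = P ge + genK_var ke me ge / 2 * deriv (deriv P) ge"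
    by (simp add: sop_approx_def P_def[abs_def])
  ultimately show ?thesis
    by (simp add: P_eq power2_eq_square)
qed

lemma sop_approx_error_eq:
  fixes m lam ge ce g a :: real
  assumes m: "m > 0" "m \<noteq> 1" and g: "g > 0" and lam: "lam > 0" and ge: "ge > 0"
    and a: "a = lam - 1 + lam * ge" "a > 0" and var: "genK_var ke me ge = ge\<^sup>2 * ce"
  shows "sop_approx lam m m g ke me ge
            - g powr (- m) *
              ((Digamma (m + 1) + 2 * Digamma 1 - Digamma m - ln (m\<^sup>2 * a / g))
                 / (m powr (- 2 * m + 1) * (Gamma m)\<^sup>2 * a powr (- m))
               + ce * (Digamma (m - 1) + 2 * Digamma 1 - Digamma m - ln (m\<^sup>2 * a / g))
                 / (2 * m powr (- 2 * m) * lam powr (-2) * ge powr (-2)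
                    * Gamma m * Gamma (m - 1) * a powr (2 - m)))
    = genK_cdf m m 1 (a / g) - genK_cdf_approx m (a / g)
      + ge\<^sup>2 * ce / 2 * lam\<^sup>2 * ((genK_pdf_deriv m (a / g) - genK_pdf_deriv_approx m (a / g)) / g\<^sup>2)"
proof -
  have "sop_approx lam m m g ke me ge
      = genK_cdf m m 1 (a / g) + ge\<^sup>2 * ce / 2 * (lam / g)\<^sup>2 * genK_pdf_deriv m (a / g)"
    using sop_approx_eq[OF m(1) g lam] a var by simp
  then show ?thesis
    unfolding distrib_left genK_cdf_approx_eq[OF m(1) a(2) g] genK_pdf_deriv_approx_eq[OF m a(2) g lam ge]
    using g by (simp add: field_simps power2_eq_square)
qed

theorem lemma2:
  fixes Rs kd md ke me ge :: real
  assumes "Rs > 0" and "kd > 0" and "md > 0" and "ke > 0" and "me > 0" and "ge > 0"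
    and "kd = md" and "md \<noteq> 1"
  defines "lam \<equiv> 2 powr Rs"
  defines "a \<equiv> lam - 1 + lam * ge"
  defines "ce \<equiv> (ke + 1) * (me + 1) / (ke * me) - 1"
  shows "(\<lambda>gd. sop_approx lam kd md gd ke me ge
            - gd powr (- md) *
              ((Digamma (md + 1) + 2 * Digamma 1 - Digamma md - ln (md\<^sup>2 * a / gd))
                 / (md powr (- 2 * md + 1) * (Gamma md)\<^sup>2 * a powr (- md))
               + ce * (Digamma (md - 1) + 2 * Digamma 1 - Digamma md - ln (md\<^sup>2 * a / gd))
                 / (2 * md powr (- 2 * md) * lam powr (-2) * ge powr (-2)
                    * Gamma md * Gamma (md - 1) * a powr (2 - md))))
         \<in> o[at_top](\<lambda>gd. gd powr (- md))"
proof -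
  have m: "md > 0" "md \<noteq> 1" and ge: "ge > 0"
    using assms by simp_all
  have lam: "lam > 1"
    using assms(1) by (simp add: lam_def)
  with ge have a: "a > 0"
    by (simp add: a_def add_pos_pos)
  have var: "genK_var ke me ge = ge\<^sup>2 * ce"
    using assms(4,5) by (simp add: genK_var_eq ce_def)
  from lam have "lam > 0"
    by simp
  note error_eq = sop_approx_error_eq[OF m _ this ge a_def[THEN meta_eq_to_obj_eq] a var]
  have error_smallo: "(\<lambda>g. genK_cdf md md 1 (a / g) - genK_cdf_approx md (a / g)
      + ge\<^sup>2 * ce / 2 * lam\<^sup>2 * ((genK_pdf_deriv md (a / g) - genK_pdf_deriv_approx md (a / g)) / g\<^sup>2))
      \<in> o[at_top](\<lambda>g. g powr (- md))"
    by (rule smallo_rescaled_sum[OF a genK_cdf_asymptotics[OF m(1)] genK_pdf_deriv_asymptotics[OF m(1)]])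
  show ?thesis
    unfolding assms(7)
    by (intro landau_o.small.in_cong[THEN iffD1, OF _ error_smallo] eventually_mono[OF eventually_gt_at_top[of 0]])
       (simp only: error_eq)
qed

end
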